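(* Let $<_t$ be a term order on $\binom{[n]}{2}$ such that $\{a,b\}<_t\{a',b'\}$ whenever $a+b<a'+b'$. Let $G$ be a graph on $[n]$ such that every $3$-subset of $[n]$ contains an edge of $G$. Then the exterior shifting $E(G)^{<_t}$ contains $B(n)=\{\{a,b\}:1\le a<b\le n,\ a+b\le n\}$.
   Context: Partial order on $k$-subsets of $[n]$: for $S=\{s_1<\dots<s_k\}$, $T=\{t_1<\dots<t_k\}$, $S\le T$ iff $s_i\le t_i$ for all $i$. A term order on $\binom{[n]}{k}$ is a linear order extending this partial order. Let $X=(x_{ij})$ be an $n\times n$ matrix of independent indeterminates over $\mathbb{Q}$ and $C_k(X)$ its $k$-th compound matrix (entries $c_{S,T}=\det(x_{ij})_{i\in S,j\in T}$ for $k$-subsets $S,T$). For $\mathcal F\subseteq\binom{[n]}{k}$, the exterior shifting $\mathcal F^{<_t}$ is obtained greedily: go through all $S\in\binom{[n]}{k}$ in increasing $<_t$ order and put $S$ into $\mathcal F^{<_t}$ iff the row of $C_k(X)$ indexed by $S$, restricted to the columns indexed by $\mathcal F$, is linearly independent (over $\mathbb{Q}(x_{ij})$) of the previously selected such rows. Thus $|\mathcal F^{<_t}|=|\mathcal F|$. *)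

theory Defs
  imports Complex_Main "HOL-Library.Poly_Mapping" "HOL-Library.Product_Lexorder"
    "HOL-Computational_Algebra.Fraction_Field" "HOL-Combinatorics.Permutations"
begin

text \<open>Multivariate polynomials over the rationals in the variables x_(i,j),
  as finitely supported maps from monomials (exponent vectors) to coefficients.\<close>
type_synonym mpoly = "((nat \<times> nat) \<Rightarrow>\<^sub>0 nat) \<Rightarrow>\<^sub>0 rat"

type_synonym ratfun = "mpoly fract"

definition var :: "nat \<Rightarrow> nat \<Rightarrow> mpoly" where
  "var i j = Poly_Mapping.single (Poly_Mapping.single (i, j) 1) 1"

definition ksubsets :: "nat \<Rightarrow> nat \<Rightarrow> nat set set" where
  "ksubsets n k = {S. S \<subseteq> {1..n} \<and> card S = k}"

text \<open>i-th smallest element (0-based) of a finite set.\<close>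
definition elem :: "nat set \<Rightarrow> nat \<Rightarrow> nat" where
  "elem S i = sorted_list_of_set S ! i"

definition gale_le :: "nat \<Rightarrow> nat set \<Rightarrow> nat set \<Rightarrow> bool" where
  "gale_le k S T \<longleftrightarrow> (\<forall>i<k. elem S i \<le> elem T i)"

definition term_order :: "nat \<Rightarrow> nat \<Rightarrow> (nat set \<times> nat set) set \<Rightarrow> bool" where
  "term_order n k r \<longleftrightarrow> linear_order_on (ksubsets n k) r \<and> r \<subseteq> ksubsets n k \<times> ksubsets n k \<and>
     (\<forall>S\<in>ksubsets n k. \<forall>T\<in>ksubsets n k. gale_le k S T \<longrightarrow> (S, T) \<in> r)"

text \<open>Entry c_{S,T} of the k-th compound matrix of X = (x_ij): the minor with
  rows S and columns T (Leibniz formula, rows/columns in increasing order).\<close>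
definition compound :: "nat \<Rightarrow> nat set \<Rightarrow> nat set \<Rightarrow> ratfun" where
  "compound k S T = Fract (\<Sum>p | p permutes {..<k}.
      of_int (sign p) * (\<Prod>i<k. var (elem S i) (elem T (p i)))) 1"

definition rows_indep :: "nat \<Rightarrow> nat set set \<Rightarrow> nat set set \<Rightarrow> bool" where
  "rows_indep k F A \<longleftrightarrow> (\<forall>c :: nat set \<Rightarrow> ratfun.
     (\<forall>T\<in>F. (\<Sum>S\<in>A. c S * compound k S T) = 0) \<longrightarrow> (\<forall>S\<in>A. c S = 0))"

fun greedy :: "nat \<Rightarrow> nat set set \<Rightarrow> nat set list \<Rightarrow> nat set set \<Rightarrow> nat set set" where
  "greedy k F [] acc = acc"
| "greedy k F (S # Ss) acc =
     (if rows_indep k F (insert S acc) then greedy k F Ss (insert S acc) else greedy k F Ss acc)"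

definition order_list :: "nat \<Rightarrow> nat \<Rightarrow> (nat set \<times> nat set) set \<Rightarrow> nat set list" where
  "order_list n k r = (THE xs. set xs = ksubsets n k \<and> distinct xs \<and>
      sorted_wrt (\<lambda>S T. (S, T) \<in> r) xs)"

definition ext_shift :: "nat \<Rightarrow> nat \<Rightarrow> (nat set \<times> nat set) set \<Rightarrow> nat set set \<Rightarrow> nat set set" where
  "ext_shift n k r F = greedy k F (order_list n k r) {}"

definition Bset :: "nat \<Rightarrow> nat set set" where
  "Bset n = {{a, b} | a b. 1 \<le> a \<and> a < b \<and> b \<le> n \<and> a + b \<le> n}"

end

theory Submission
  imports Defs "Jordan_Normal_Form.Determinant"
begin

text \<open>In a term order refining \<open>a + b\<close>, the pairs of \<open>B(n)\<close> precede all other pairs, so the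
  greedy selection takes all of them as soon as their rows of \<open>C\<^sub>2(X)\<close>, restricted to the
  columns \<open>E(G)\<close>, are linearly independent. Independence over \<open>\<rat>(x\<^sub>i\<^sub>j)\<close> follows from
  independence at a single rational matrix, since the Gram determinant of these rows is a
  polynomial that does not vanish there.

  The rational matrix, with rows indexed by \<open>s + 1, \<dots>, s + m\<close>, is built by induction on the
  number \<open>m\<close> of vertices. The non-edges of \<open>G\<close> form a triangle-free graph, so there are two
  vertices \<open>u, v\<close> such that every other vertex \<open>w\<close> is joined in \<open>G\<close> to \<open>u\<close> or to \<open>v\<close>. Row
  \<open>s + 1\<close> is the indicator vector of \<open>{u, v}\<close>, row \<open>s + m\<close> that of \<open>{u}\<close>, and the rows in
  between come from the induction hypothesis for the remaining vertices and vanish at \<open>u\<close> and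
  \<open>v\<close>. On the edge \<open>{u, w}\<close> or \<open>{v, w}\<close> the minor of the rows \<open>(s + 1, b)\<close> is the entry of
  row \<open>b\<close> at \<open>w\<close>, while the minors of the remaining pairs of \<open>B\<close>, a shifted copy of
  \<open>B(m - 2)\<close>, vanish there.\<close>

section \<open>Linear independence of rows\<close>

definition independent_rows :: "'i set \<Rightarrow> 'j set \<Rightarrow> ('i \<Rightarrow> 'j \<Rightarrow> 'a::comm_ring_1) \<Rightarrow> bool" where
  "independent_rows I J M \<longleftrightarrow>
     (\<forall>c. (\<forall>j\<in>J. (\<Sum>i\<in>I. c i * M i j) = 0) \<longrightarrow> (\<forall>i\<in>I. c i = 0))"

lemma independent_rowsD:
  "independent_rows I J M \<Longrightarrow> (\<And>j. j \<in> J \<Longrightarrow> (\<Sum>i\<in>I. c i * M i j) = 0) \<Longrightarrow> i \<in> I \<Longrightarrow> c i = 0"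
  by (simp add: independent_rows_def)

lemma rows_indep_eq_independent_rows: "rows_indep k F A = independent_rows A F (compound k)"
  by (simp add: rows_indep_def independent_rows_def)

lemma independent_rows_cong:
  "(\<And>i j. i \<in> I \<Longrightarrow> j \<in> J \<Longrightarrow> M i j = M' i j) \<Longrightarrow>
     independent_rows I J M \<longleftrightarrow> independent_rows I J M'"
  by (simp add: independent_rows_def)

lemma independent_rows_subset:
  assumes "independent_rows I J M" "finite I" "I' \<subseteq> I"
  shows "independent_rows I' J M"
  unfolding independent_rows_def
proof (intro allI impI)
  fix c assume c: "\<forall>j\<in>J. (\<Sum>i\<in>I'. c i * M i j) = 0"
  define c' where "c' i = (if i \<in> I' then c i else 0)" for i
  have "(\<Sum>i\<in>I. c' i * M i j) = (\<Sum>i\<in>I'. c i * M i j)" for j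
    using assms(2,3) by (intro sum.mono_neutral_cong_right) (auto simp: c'_def)
  then have "\<forall>i\<in>I. c' i = 0"
    using assms(1) c unfolding independent_rows_def by metis
  then show "\<forall>i\<in>I'. c i = 0"
    using assms(3) by (metis c'_def subsetD)
qed

lemma independent_rows_bij_betw:
  assumes g: "bij_betw g I I'"
  shows "independent_rows I' J M \<longleftrightarrow> independent_rows I J (\<lambda>i. M (g i))"
proof
  assume indep: "independent_rows I' J M"
  show "independent_rows I J (\<lambda>i. M (g i))"
    unfolding independent_rows_def
  proof (intro allI impI)
    fix c assume c: "\<forall>j\<in>J. (\<Sum>i\<in>I. c i * M (g i) j) = 0"
    define c' where "c' = c \<circ> inv_into I g"
    have c'g: "c' (g i) = c i" if "i \<in> I" for i
      using g that by (simp add: c'_def bij_betw_inv_into_left)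
    have "(\<Sum>i'\<in>I'. c' i' * M i' j) = (\<Sum>i\<in>I. c i * M (g i) j)" for j
      by (simp add: sum.reindex_bij_betw[OF g, symmetric] c'g)
    then have "\<forall>i'\<in>I'. c' i' = 0"
      using indep c unfolding independent_rows_def by metis
    then show "\<forall>i\<in>I. c i = 0"
      using g c'g by (auto simp: bij_betw_def)
  qed
next
  assume indep: "independent_rows I J (\<lambda>i. M (g i))"
  show "independent_rows I' J M"
    unfolding independent_rows_def
  proof (intro allI impI)
    fix c assume c: "\<forall>j\<in>J. (\<Sum>i'\<in>I'. c i' * M i' j) = 0"
    have "(\<Sum>i\<in>I. c (g i) * M (g i) j) = (\<Sum>i'\<in>I'. c i' * M i' j)" for j
      by (rule sum.reindex_bij_betw[OF g])
    then have "\<forall>i\<in>I. c (g i) = 0"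
      using indep c unfolding independent_rows_def by metis
    then show "\<forall>i'\<in>I'. c i' = 0"
      using g by (auto simp: bij_betw_def)
  qed
qed

lemma independent_rows_image_columns:
  "independent_rows I (h ` J) M \<longleftrightarrow> independent_rows I J (\<lambda>i j. M i (h j))"
  by (simp add: independent_rows_def)

lemma independent_rows_column_multiples:
  assumes "independent_rows I J M"
    and "\<And>j. j \<in> J \<Longrightarrow> \<exists>j'\<in>J'. \<exists>t. \<forall>i\<in>I. M i j = t * M' i j'"
  shows "independent_rows I J' M'"
  unfolding independent_rows_def
proof (intro allI impI)
  fix c assume c: "\<forall>j'\<in>J'. (\<Sum>i\<in>I. c i * M' i j') = 0"
  have "(\<Sum>i\<in>I. c i * M i j) = 0" if j: "j \<in> J" for j
  proof -
    obtain j' t where "j' \<in> J'" "\<forall>i\<in>I. M i j = t * M' i j'"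
      using assms(2)[OF j] by blast
    then have "(\<Sum>i\<in>I. c i * M i j) = t * (\<Sum>i\<in>I. c i * M' i j')"
      by (simp add: sum_distrib_left mult_ac)
    with \<open>j' \<in> J'\<close> c show ?thesis by simp
  qed
  then show "\<forall>i\<in>I. c i = 0"
    using assms(1) unfolding independent_rows_def by blast
qed

section \<open>Greedy selection along the term order\<close>

lemma greedy_mono: "acc \<subseteq> greedy k F xs acc"
proof (induction xs arbitrary: acc)
  case (Cons S Ss)
  show ?case
    using Cons.IH[of acc] Cons.IH[of "insert S acc"] by auto
qed simp

lemma greedy_append: "greedy k F (xs @ ys) acc = greedy k F ys (greedy k F xs acc)"
  by (induction xs arbitrary: acc) auto

lemma greedy_independent:
  assumes "rows_indep k F (acc \<union> set xs)" "finite acc"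
  shows "greedy k F xs acc = acc \<union> set xs"
  using assms
proof (induction xs arbitrary: acc)
  case (Cons S Ss)
  have "rows_indep k F (insert S acc)"
    using Cons.prems independent_rows_subset[of "acc \<union> set (S # Ss)" F "compound k" "insert S acc"]
    by (simp add: rows_indep_eq_independent_rows subset_insertI2)
  then show ?case
    using Cons.IH[of "insert S acc"] Cons.prems by simp
qed simp

lemma linear_order_on_has_least:
  assumes "linear_order_on K r" "finite A" "A \<noteq> {}" "A \<subseteq> K"
  shows "\<exists>x\<in>A. \<forall>y\<in>A. (x, y) \<in> r"
  using assms(2-4)
proof (induction A rule: finite_ne_induct)
  case (singleton x)
  then show ?case
    using assms(1) by (auto simp: linear_order_on_def partial_order_on_def preorder_on_def refl_on_def)
next
  case (insert x A)
  then obtain m where m: "m \<in> A" "\<forall>y\<in>A. (m, y) \<in> r" by auto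
  have "(x, m) \<in> r \<or> (m, x) \<in> r"
    using assms(1) insert m(1) by (auto simp: linear_order_on_def total_on_def)
  moreover have "trans r" "refl_on K r"
    using assms(1) by (auto simp: linear_order_on_def partial_order_on_def preorder_on_def)
  ultimately show ?case
    using m insert.prems by (metis insert_iff insert_subset refl_onD transE)
qed

lemma linear_order_on_sorted_list:
  assumes "linear_order_on K r" "finite A" "A \<subseteq> K"
  shows "\<exists>xs. set xs = A \<and> distinct xs \<and> sorted_wrt (\<lambda>x y. (x, y) \<in> r) xs"
  using assms(2,3)
proof (induction "card A" arbitrary: A)
  case 0
  then show ?case by auto
next
  case (Suc n)
  then have "A \<noteq> {}" by auto
  then obtain x where x: "x \<in> A" "\<forall>y\<in>A. (x, y) \<in> r"
    using linear_order_on_has_least[OF assms(1)] Suc.prems by blast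
  have "card (A - {x}) = n"
    using Suc.hyps(2) x(1) by simp
  then obtain xs where "set xs = A - {x}" "distinct xs" "sorted_wrt (\<lambda>x y. (x, y) \<in> r) xs"
    using Suc.hyps(1) Suc.prems by blast
  then show ?case
    using x by (intro exI[of _ "x # xs"]) auto
qed

lemma sorted_wrt_antisym_unique:
  assumes "antisym r"
    and "sorted_wrt (\<lambda>x y. (x, y) \<in> r) xs" "distinct xs"
    and "sorted_wrt (\<lambda>x y. (x, y) \<in> r) ys" "distinct ys"
    and "set xs = set ys"
  shows "xs = ys"
  using assms(2-6)
proof (induction xs arbitrary: ys)
  case (Cons x xs)
  then obtain y ys' where ys: "ys = y # ys'"
    by (cases ys) auto
  have "x = y"
  proof (rule ccontr)
    assume "x \<noteq> y"
    then have "(x, y) \<in> r" "(y, x) \<in> r"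
      using Cons.prems ys by auto
    with \<open>x \<noteq> y\<close> show False
      using assms(1) by (auto dest: antisymD)
  qed
  moreover have "set xs = set ys'"
    using Cons.prems ys \<open>x = y\<close> by (auto simp: insert_ident)
  ultimately show ?case
    using Cons.IH[of ys'] Cons.prems ys by auto
qed simp

lemma finite_ksubsets: "finite (ksubsets n k)"
  by (rule finite_subset[of _ "Pow {1..n}"]) (auto simp: ksubsets_def)

lemma order_list:
  assumes "term_order n k r"
  shows "set (order_list n k r) = ksubsets n k" "distinct (order_list n k r)"
    and "sorted_wrt (\<lambda>S T. (S, T) \<in> r) (order_list n k r)"
proof -
  have lin: "linear_order_on (ksubsets n k) r" and "antisym r"
    using assms by (auto simp: term_order_def linear_order_on_def partial_order_on_def)
  obtain xs where xs: "set xs = ksubsets n k" "distinct xs" "sorted_wrt (\<lambda>S T. (S, T) \<in> r) xs"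
    using linear_order_on_sorted_list[OF lin finite_ksubsets] by blast
  have "order_list n k r = xs"
    unfolding order_list_def
    using xs sorted_wrt_antisym_unique[OF \<open>antisym r\<close>] by (intro the_equality) auto
  then show "set (order_list n k r) = ksubsets n k" "distinct (order_list n k r)"
    and "sorted_wrt (\<lambda>S T. (S, T) \<in> r) (order_list n k r)"
    using xs by simp_all
qed

lemma set_takeWhile_sorted_wrt:
  assumes "sorted_wrt R xs"
    and "\<And>x y. x \<in> set xs \<Longrightarrow> y \<in> set xs \<Longrightarrow> P x \<Longrightarrow> \<not> P y \<Longrightarrow> \<not> R y x"
  shows "set (takeWhile P xs) = {x \<in> set xs. P x}"
  using assms by (induction xs) auto

lemma ext_shift_contains_initial_segment:
  assumes r: "term_order n k r" and A: "A \<subseteq> ksubsets n k"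
    and initial: "\<And>S T. S \<in> A \<Longrightarrow> T \<in> ksubsets n k - A \<Longrightarrow> (S, T) \<in> r"
    and indep: "rows_indep k F A"
  shows "A \<subseteq> ext_shift n k r F"
proof -
  define xs where "xs = order_list n k r"
  have "antisym r"
    using r by (simp add: term_order_def linear_order_on_def partial_order_on_def)
  then have "set (takeWhile (\<lambda>S. S \<in> A) xs) = {S \<in> set xs. S \<in> A}"
    using order_list[OF r] initial
    by (intro set_takeWhile_sorted_wrt[where R = "\<lambda>S T. (S, T) \<in> r"])
      (auto simp: xs_def dest: antisymD)
  then have "set (takeWhile (\<lambda>S. S \<in> A) xs) = A"
    using order_list(1)[OF r] A by (auto simp: xs_def)
  then have "A = greedy k F (takeWhile (\<lambda>S. S \<in> A) xs) {}"
    using indep by (simp add: greedy_independent)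
  also have "\<dots> \<subseteq> greedy k F (dropWhile (\<lambda>S. S \<in> A) xs) \<dots>"
    by (rule greedy_mono)
  also have "\<dots> = ext_shift n k r F"
    by (simp add: ext_shift_def xs_def flip: greedy_append)
  finally show ?thesis .
qed

section \<open>Specialisation of polynomial rows\<close>

definition monomial_value :: "('v \<Rightarrow> 'a::comm_semiring_1) \<Rightarrow> ('v \<Rightarrow>\<^sub>0 nat) \<Rightarrow> 'a" where
  "monomial_value x m = (\<Prod>v\<in>Poly_Mapping.keys m. x v ^ Poly_Mapping.lookup m v)"

definition poly_eval :: "('v \<Rightarrow> 'a::comm_semiring_1) \<Rightarrow> (('v \<Rightarrow>\<^sub>0 nat) \<Rightarrow>\<^sub>0 'a) \<Rightarrow> 'a" where
  "poly_eval x p = (\<Sum>m\<in>Poly_Mapping.keys p. Poly_Mapping.lookup p m * monomial_value x m)"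

lemma monomial_value_eq_prod:
  assumes "finite V" "Poly_Mapping.keys m \<subseteq> V"
  shows "monomial_value x m = (\<Prod>v\<in>V. x v ^ Poly_Mapping.lookup m v)"
  unfolding monomial_value_def using assms by (intro prod.mono_neutral_left) (auto simp: in_keys_iff)

lemma monomial_value_add: "monomial_value x (m + m') = monomial_value x m * monomial_value x m'"
proof -
  let ?V = "Poly_Mapping.keys m \<union> Poly_Mapping.keys m'"
  have "monomial_value x (m + m') = (\<Prod>v\<in>?V. x v ^ Poly_Mapping.lookup (m + m') v)"
    using keys_add[of m m'] by (intro monomial_value_eq_prod) auto
  also have "\<dots> = (\<Prod>v\<in>?V. x v ^ Poly_Mapping.lookup m v * x v ^ Poly_Mapping.lookup m' v)"
    by (simp add: lookup_add power_add)
  also have "\<dots> = monomial_value x m * monomial_value x m'"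
    by (simp add: prod.distrib monomial_value_eq_prod[of ?V])
  finally show ?thesis .
qed

lemma poly_eval_eq_sum:
  assumes "finite M" "Poly_Mapping.keys p \<subseteq> M"
  shows "poly_eval x p = (\<Sum>m\<in>M. Poly_Mapping.lookup p m * monomial_value x m)"
  unfolding poly_eval_def using assms by (intro sum.mono_neutral_left) (auto simp: in_keys_iff)

lemma poly_eval_add: "poly_eval x (p + q) = poly_eval x p + poly_eval x q"
proof -
  let ?M = "Poly_Mapping.keys p \<union> Poly_Mapping.keys q"
  have "poly_eval x (p + q) = (\<Sum>m\<in>?M. Poly_Mapping.lookup (p + q) m * monomial_value x m)"
    using keys_add[of p q] by (intro poly_eval_eq_sum) auto
  also have "\<dots> = poly_eval x p + poly_eval x q"
    by (simp add: lookup_add distrib_right sum.distrib poly_eval_eq_sum[of ?M])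
  finally show ?thesis .
qed

lemma poly_eval_zero: "poly_eval x 0 = 0"
  by (simp add: poly_eval_def)

lemma poly_eval_sum: "poly_eval x (\<Sum>i\<in>I. p i) = (\<Sum>i\<in>I. poly_eval x (p i))"
  by (induction I rule: infinite_finite_induct) (auto simp: poly_eval_zero poly_eval_add)

lemma poly_eval_single: "poly_eval x (Poly_Mapping.single m a) = a * monomial_value x m"
  by (simp add: poly_eval_def)

lemma poly_mapping_sum_single:
  "p = (\<Sum>m\<in>Poly_Mapping.keys p. Poly_Mapping.single m (Poly_Mapping.lookup p m))"
proof (rule poly_mapping_eqI)
  fix k
  show "Poly_Mapping.lookup p k = Poly_Mapping.lookup
      (\<Sum>m\<in>Poly_Mapping.keys p. Poly_Mapping.single m (Poly_Mapping.lookup p m)) k"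
    unfolding lookup_sum lookup_single
    by (cases "k \<in> Poly_Mapping.keys p") (auto simp: when_def in_keys_iff)
qed

lemma poly_eval_mult: "poly_eval x (p * q) = poly_eval x p * poly_eval x q"
proof -
  let ?p = "Poly_Mapping.lookup p" and ?q = "Poly_Mapping.lookup q"
  have "p * q = (\<Sum>m\<in>Poly_Mapping.keys p. \<Sum>m'\<in>Poly_Mapping.keys q.
                   Poly_Mapping.single (m + m') (?p m * ?q m'))"
    by (subst poly_mapping_sum_single[of p], subst poly_mapping_sum_single[of q])
      (simp add: sum_product mult_single)
  then have "poly_eval x (p * q) = (\<Sum>m\<in>Poly_Mapping.keys p. \<Sum>m'\<in>Poly_Mapping.keys q.
                   ?p m * ?q m' * monomial_value x (m + m'))"
    by (simp add: poly_eval_sum poly_eval_single)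
  also have "\<dots> = poly_eval x p * poly_eval x q"
    by (simp add: poly_eval_def sum_product monomial_value_add mult_ac)
  finally show ?thesis .
qed

interpretation poly_eval: comm_ring_hom "poly_eval x"
  by unfold_locales
    (auto simp: poly_eval_zero poly_eval_add poly_eval_mult poly_eval_single[of x 0 1, simplified] monomial_value_def)

interpretation to_fract: inj_comm_ring_hom to_fract
  by unfold_locales auto

lemma poly_eval_var: "poly_eval (case_prod x) (var i j) = x i j"
  by (simp add: var_def poly_eval_single monomial_value_def)

definition gram_mat :: "nat \<Rightarrow> nat \<Rightarrow> (nat \<Rightarrow> nat \<Rightarrow> 'a::comm_ring_1) \<Rightarrow> 'a mat" where
  "gram_mat d e w = mat d d (\<lambda>(i, j). \<Sum>l<e. w i l * w j l)"

lemma gram_mat_carrier [simp]: "gram_mat d e w \<in> carrier_mat d d"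
  by (simp add: gram_mat_def)

lemma gram_mat_mult_vec:
  assumes "i < d" "dim_vec v = d"
  shows "(gram_mat d e w *\<^sub>v v) $ i = (\<Sum>l<e. w i l * (\<Sum>j<d. v $ j * w j l))"
proof -
  have "(gram_mat d e w *\<^sub>v v) $ i = (\<Sum>j<d. (\<Sum>l<e. w i l * w j l) * v $ j)"
    using assms by (simp add: gram_mat_def scalar_prod_def atLeast0LessThan)
  also have "\<dots> = (\<Sum>j<d. \<Sum>l<e. w i l * (v $ j * w j l))"
    by (simp add: sum_distrib_left sum_distrib_right mult_ac)
  also have "\<dots> = (\<Sum>l<e. w i l * (\<Sum>j<d. v $ j * w j l))"
    by (subst sum.swap) (simp add: sum_distrib_left)
  finally show ?thesis .
qed

lemma (in comm_ring_hom) map_gram_mat: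
  "map_mat hom (gram_mat d e w) = gram_mat d e (\<lambda>i l. hom (w i l))"
  by (rule eq_matI) (auto simp: gram_mat_def hom_sum hom_mult)

lemma independent_rows_if_det_gram_mat:
  fixes w :: "nat \<Rightarrow> nat \<Rightarrow> 'a::field"
  assumes "det (gram_mat d e w) \<noteq> 0"
  shows "independent_rows {..<d} {..<e} w"
  unfolding independent_rows_def
proof (intro allI impI)
  fix c assume c: "\<forall>l\<in>{..<e}. (\<Sum>i<d. c i * w i l) = 0"
  define v where "v = vec d c"
  have "(\<Sum>j<d. v $ j * w j l) = (\<Sum>j<d. c j * w j l)" for l
    by (intro sum.cong) (auto simp: v_def)
  then have "gram_mat d e w *\<^sub>v v = 0\<^sub>v d"
    using c by (intro eq_vecI) (simp_all add: gram_mat_mult_vec v_def, simp add: gram_mat_def)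
  moreover have "v \<in> carrier_vec d"
    by (simp add: v_def)
  ultimately have "v = 0\<^sub>v d"
    using assms det_0_iff_vec_prod_zero_field[OF gram_mat_carrier[of d e w]] by blast
  then show "\<forall>i\<in>{..<d}. c i = 0"
    by (metis index_vec index_zero_vec(1) lessThan_iff v_def)
qed

text \<open>Over an ordered field the Gram matrix of independent rows is positive definite.\<close>
lemma det_gram_mat_nonzero:
  fixes w :: "nat \<Rightarrow> nat \<Rightarrow> 'a::linordered_field"
  assumes indep: "independent_rows {..<d} {..<e} w"
  shows "det (gram_mat d e w) \<noteq> 0"
proof
  assume "det (gram_mat d e w) = 0"
  then obtain y where y: "y \<in> carrier_vec d" "y \<noteq> 0\<^sub>v d" "gram_mat d e w *\<^sub>v y = 0\<^sub>v d"
    using det_0_iff_vec_prod_zero_field[OF gram_mat_carrier[of d e w]] by auto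
  define z where "z l = (\<Sum>i<d. y $ i * w i l)" for l
  have "(\<Sum>l<e. z l * z l) = (\<Sum>l<e. \<Sum>i<d. y $ i * (w i l * z l))"
    by (simp add: z_def sum_distrib_right mult_ac)
  also have "\<dots> = (\<Sum>i<d. y $ i * (\<Sum>l<e. w i l * z l))"
    by (subst sum.swap) (simp add: sum_distrib_left)
  also have "\<dots> = (\<Sum>i<d. y $ i * (gram_mat d e w *\<^sub>v y) $ i)"
    using y(1) by (simp add: gram_mat_mult_vec z_def)
  also have "\<dots> = 0"
    using y(3) by simp
  finally have "\<forall>l\<in>{..<e}. z l = 0"
    by (subst (asm) sum_nonneg_eq_0_iff) auto
  then have "\<forall>i\<in>{..<d}. y $ i = 0"
    using indep unfolding independent_rows_def z_def by blast
  then have "y = 0\<^sub>v d"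
    using y(1) by (intro eq_vecI) auto
  with y(2) show False ..
qed

text \<open>The Gram determinant of the rows is a polynomial that does not vanish at \<open>x\<close>.\<close>
lemma independent_rows_to_fract:
  fixes P :: "'i \<Rightarrow> 'j \<Rightarrow> ('v::linorder \<Rightarrow>\<^sub>0 nat) \<Rightarrow>\<^sub>0 rat"
  assumes "finite I" "finite J"
    and "independent_rows I J (\<lambda>i j. poly_eval x (P i j))"
  shows "independent_rows I J (\<lambda>i j. to_fract (P i j))"
proof -
  obtain g where g: "bij_betw g {..<card I} I"
    using ex_bij_betw_nat_finite[OF assms(1)] by (auto simp: atLeast0LessThan)
  obtain h where h: "bij_betw h {..<card J} J"
    using ex_bij_betw_nat_finite[OF assms(2)] by (auto simp: atLeast0LessThan)
  have J: "h ` {..<card J} = J"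
    using h by (simp add: bij_betw_def)
  have reindex: "independent_rows I J M \<longleftrightarrow>
      independent_rows {..<card I} {..<card J} (\<lambda>i l. M (g i) (h l))"
    for M :: "'i \<Rightarrow> 'j \<Rightarrow> 'b::comm_ring_1"
    using independent_rows_image_columns[of "{..<card I}" h "{..<card J}" "\<lambda>i. M (g i)"]
    by (simp add: J independent_rows_bij_betw[OF g])
  define Q where "Q i l = P (g i) (h l)" for i l
  have "det (gram_mat (card I) (card J) (\<lambda>i l. poly_eval x (Q i l))) \<noteq> 0"
    using assms(3) by (intro det_gram_mat_nonzero) (simp add: reindex Q_def)
  then have "det (gram_mat (card I) (card J) Q) \<noteq> 0"
    by (auto simp flip: poly_eval.map_gram_mat)
  then have "det (gram_mat (card I) (card J) (\<lambda>i l. to_fract (Q i l))) \<noteq> 0"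
    by (simp flip: to_fract.map_gram_mat)
  then show ?thesis
    by (simp add: reindex Q_def independent_rows_if_det_gram_mat)
qed

section \<open>Independent minors from a triangle-free graph\<close>

definition pair_minor :: "('r \<Rightarrow> 'c \<Rightarrow> 'a::comm_ring_1) \<Rightarrow> 'r \<times> 'r \<Rightarrow> 'c \<times> 'c \<Rightarrow> 'a" where
  "pair_minor f p q = f (fst p) (fst q) * f (snd p) (snd q) - f (fst p) (snd q) * f (snd p) (fst q)"

definition triangle_free :: "'v set set \<Rightarrow> bool" where
  "triangle_free H \<longleftrightarrow>
     (\<nexists>x y z. x \<noteq> y \<and> y \<noteq> z \<and> x \<noteq> z \<and> {x, y} \<in> H \<and> {y, z} \<in> H \<and> {x, z} \<in> H)"

definition non_edge_pairs :: "'v set \<Rightarrow> 'v set set \<Rightarrow> ('v \<times> 'v) set" where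
  "non_edge_pairs V H = {(i, j). i \<in> V \<and> j \<in> V \<and> i \<noteq> j \<and> {i, j} \<notin> H}"

definition B_pairs :: "nat \<Rightarrow> nat \<Rightarrow> (nat \<times> nat) set" where
  "B_pairs s m = {(a, b). s < a \<and> a < b \<and> b \<le> s + m \<and> a + b \<le> 2 * s + m}"

lemma B_pairs_empty: "m < 2 \<Longrightarrow> B_pairs s m = {}"
  by (auto simp: B_pairs_def)

lemma finite_B_pairs: "finite (B_pairs s m)"
  by (rule finite_subset[of _ "{..s + m} \<times> {..s + m}"]) (auto simp: B_pairs_def)

lemma B_pairs_Suc_Suc:
  "B_pairs s (Suc (Suc k)) = Pair (Suc s) ` {Suc s<..Suc s + k} \<union> B_pairs (Suc s) k"
  by (auto simp: B_pairs_def)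

lemma sum_B_pairs_Suc_Suc:
  "(\<Sum>p\<in>B_pairs s (Suc (Suc k)). g p) =
     (\<Sum>b\<in>{Suc s<..Suc s + k}. g (Suc s, b)) + (\<Sum>p\<in>B_pairs (Suc s) k. g p)"
proof -
  have "Pair (Suc s) ` {Suc s<..Suc s + k} \<inter> B_pairs (Suc s) k = {}"
    by (auto simp: B_pairs_def)
  then show ?thesis
    by (simp add: B_pairs_Suc_Suc sum.union_disjoint finite_B_pairs sum.reindex inj_on_def)
qed

lemma triangle_freeD:
  "triangle_free H \<Longrightarrow> {x, y} \<in> H \<Longrightarrow> {y, z} \<in> H \<Longrightarrow> {x, z} \<in> H \<Longrightarrow>
     x \<noteq> y \<Longrightarrow> y \<noteq> z \<Longrightarrow> x \<noteq> z \<Longrightarrow> False"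
  by (auto simp: triangle_free_def)

lemma triangle_free_obtain_pair_without_common_neighbour:
  assumes "triangle_free H" "finite V" "2 \<le> card V"
  obtains u v where "u \<in> V" "v \<in> V" "u \<noteq> v"
    and "\<And>w. w \<in> V \<Longrightarrow> w \<noteq> u \<Longrightarrow> w \<noteq> v \<Longrightarrow> {u, w} \<notin> H \<or> {v, w} \<notin> H"
proof (cases "\<exists>u\<in>V. \<exists>v\<in>V. u \<noteq> v \<and> {u, v} \<in> H")
  case True
  then obtain u v where uv: "u \<in> V" "v \<in> V" "u \<noteq> v" and "{u, v} \<in> H"
    by blast
  have "{u, w} \<notin> H \<or> {v, w} \<notin> H" if "w \<noteq> u" "w \<noteq> v" for w
    using triangle_freeD[OF assms(1) \<open>{u, v} \<in> H\<close>, of w] uv(3) that by auto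
  then show ?thesis
    using that[OF uv] by blast
next
  case False
  obtain u v where uv: "u \<in> V" "v \<in> V" "u \<noteq> v"
    using assms(3) card_le_Suc0_iff_eq[OF assms(2)] by (metis not_less_eq_eq numeral_2_eq_2)
  show ?thesis
    by (rule that[OF uv]) (use False uv in auto)
qed

definition extend_rows :: "nat \<Rightarrow> nat \<Rightarrow> 'v \<Rightarrow> 'v \<Rightarrow> (nat \<Rightarrow> 'v \<Rightarrow> 'a::zero_neq_one) \<Rightarrow> nat \<Rightarrow> 'v \<Rightarrow> 'a"
  where
  "extend_rows s t u v f a i =
     (if a = Suc s then (if i = u \<or> i = v then 1 else 0)
      else if a = t then (if i = u then 1 else 0)
      else if i = u \<or> i = v then 0 else f a i)"

lemma independent_rows_extend_rows:
  fixes f :: "nat \<Rightarrow> 'v \<Rightarrow> 'a::comm_ring_1" and s k :: nat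
  defines "t \<equiv> s + Suc (Suc k)"
  assumes indep: "independent_rows {Suc s<..Suc s + k} V f"
    and uv: "u \<noteq> v" "u \<notin> V" "v \<notin> V"
  shows "independent_rows {s<..t} (insert u (insert v V)) (extend_rows s t u v f)"
  unfolding independent_rows_def
proof (intro allI impI)
  let ?F = "extend_rows s t u v f" and ?mid = "{Suc s<..Suc s + k}"
  fix c assume c: "\<forall>i\<in>insert u (insert v V). (\<Sum>a\<in>{s<..t}. c a * ?F a i) = 0"
  have rows: "{s<..t} = insert (Suc s) (insert t ?mid)"
    by (auto simp: t_def)
  have split: "(\<Sum>a\<in>{s<..t}. c a * ?F a i) =
      c (Suc s) * ?F (Suc s) i + c t * ?F t i + (\<Sum>a\<in>?mid. c a * ?F a i)" for i
    unfolding rows by (simp add: t_def add.assoc)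
  have mid: "?F a i = (if i = u \<or> i = v then 0 else f a i)" if "a \<in> ?mid" for a i
    using that by (auto simp: extend_rows_def t_def)
  have first: "c (Suc s) = 0"
    using c split[of v] uv by (simp add: mid extend_rows_def t_def)
  have last: "c t = 0"
    using c split[of u] uv first by (simp add: mid extend_rows_def t_def)
  have "(\<Sum>a\<in>?mid. c a * f a i) = 0" if "i \<in> V" for i
  proof -
    have "i \<noteq> u" "i \<noteq> v"
      using that uv by auto
    then show ?thesis
      using c split[of i] that first last by (simp add: mid)
  qed
  then have "\<forall>a\<in>?mid. c a = 0"
    using indep unfolding independent_rows_def by blast
  then show "\<forall>a\<in>{s<..t}. c a = 0"
    using first last rows by auto
qed

lemma independent_minors_extend_rows:
  fixes f :: "nat \<Rightarrow> 'v \<Rightarrow> 'a::comm_ring_1" and s k :: nat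
  defines "t \<equiv> s + Suc (Suc k)"
  assumes rows: "independent_rows {Suc s<..Suc s + k} V f"
    and minors: "independent_rows (B_pairs (Suc s) k) (non_edge_pairs V H) (pair_minor f)"
    and uv: "u \<noteq> v" "u \<notin> V" "v \<notin> V"
    and no_common: "\<And>w. w \<in> V \<Longrightarrow> {u, w} \<notin> H \<or> {v, w} \<notin> H"
  shows "independent_rows (B_pairs s (Suc (Suc k))) (non_edge_pairs (insert u (insert v V)) H)
           (pair_minor (extend_rows s t u v f))"
  unfolding independent_rows_def
proof (intro allI impI)
  let ?F = "extend_rows s t u v f" and ?mid = "{Suc s<..Suc s + k}"
  fix c assume c: "\<forall>q\<in>non_edge_pairs (insert u (insert v V)) H.
    (\<Sum>p\<in>B_pairs s (Suc (Suc k)). c p * pair_minor ?F p q) = 0"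
  have mid: "?F a i = (if i = u \<or> i = v then 0 else f a i)" if "a \<in> ?mid" for a i
    using that by (auto simp: extend_rows_def t_def)
  have first: "?F (Suc s) i = (if i = u \<or> i = v then 1 else 0)" for i
    by (simp add: extend_rows_def)
  have in_mid: "fst p \<in> ?mid" "snd p \<in> ?mid" if "p \<in> B_pairs (Suc s) k" for p
    using that by (auto simp: B_pairs_def)
  text \<open>A column \<open>(i, w)\<close> with \<open>i \<in> {u, v}\<close> only meets the pairs \<open>(s + 1, b)\<close>,
    where it reads off row \<open>b\<close> of \<open>f\<close> at \<open>w\<close>.\<close>
  have "(\<Sum>b\<in>?mid. c (Suc s, b) * f b w) = 0" if w: "w \<in> V" for w
  proof -
    obtain i where i: "i = u \<or> i = v" "{i, w} \<notin> H"
      using no_common[OF w] by blast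
    then have col: "(i, w) \<in> non_edge_pairs (insert u (insert v V)) H"
      using w uv by (auto simp: non_edge_pairs_def)
    have "w \<noteq> u" "w \<noteq> v"
      using w uv by auto
    then have first_pairs: "(\<Sum>b\<in>?mid. c (Suc s, b) * pair_minor ?F (Suc s, b) (i, w)) =
        (\<Sum>b\<in>?mid. c (Suc s, b) * f b w)"
      using i(1) uv(1) by (intro sum.cong) (auto simp: pair_minor_def mid first)
    have other_pairs: "(\<Sum>p\<in>B_pairs (Suc s) k. c p * pair_minor ?F p (i, w)) = 0"
      using in_mid i(1) by (intro sum.neutral) (auto simp: pair_minor_def mid)
    show ?thesis
      using bspec[OF c col] unfolding sum_B_pairs_Suc_Suc first_pairs other_pairs by simp
  qed
  then have first_zero: "\<forall>b\<in>?mid. c (Suc s, b) = 0"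
    using independent_rowsD[OF rows, where c = "\<lambda>b. c (Suc s, b)"] by blast
  have "(\<Sum>p\<in>B_pairs (Suc s) k. c p * pair_minor f p q) = 0"
    if q: "q \<in> non_edge_pairs V H" for q
  proof -
    have q_V: "fst q \<in> V" "snd q \<in> V" and col: "q \<in> non_edge_pairs (insert u (insert v V)) H"
      using q by (auto simp: non_edge_pairs_def)
    have "(\<Sum>p\<in>B_pairs (Suc s) k. c p * pair_minor ?F p q) = (\<Sum>p\<in>B_pairs (Suc s) k. c p * pair_minor f p q)"
      using in_mid uv q_V by (intro sum.cong) (auto simp: pair_minor_def mid)
    then show ?thesis
      using bspec[OF c col] first_zero by (simp add: sum_B_pairs_Suc_Suc)
  qed
  then have "\<forall>p\<in>B_pairs (Suc s) k. c p = 0"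
    using minors unfolding independent_rows_def by blast
  then show "\<forall>p\<in>B_pairs s (Suc (Suc k)). c p = 0"
    using first_zero by (auto simp: B_pairs_Suc_Suc)
qed

lemma exists_independent_B_pair_minors:
  fixes V :: "'v set"
  assumes "triangle_free H" "finite V"
  shows "\<exists>f :: nat \<Rightarrow> 'v \<Rightarrow> 'a::comm_ring_1. independent_rows {s<..s + card V} V f \<and>
           independent_rows (B_pairs s (card V)) (non_edge_pairs V H) (pair_minor f)"
  using assms(2)
proof (induction "card V" arbitrary: V s rule: less_induct)
  case less
  show ?case
  proof (cases "card V < 2")
    case True
    have "independent_rows {s<..s + card V} V (\<lambda>_ _. 1 :: 'a)"
    proof (cases "V = {}")
      case False
      then have "card V = 1"
        using True less.prems by (simp add: Suc_leI card_gt_0_iff le_antisym)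
      moreover have "{s<..Suc s} = {Suc s}"
        by auto
      ultimately show ?thesis
        using False by (auto simp: independent_rows_def)
    qed (simp add: independent_rows_def)
    with True show ?thesis
      by (intro exI[of _ "\<lambda>_ _. 1"]) (simp add: B_pairs_empty independent_rows_def)
  next
    case False
    then obtain u v where uv: "u \<in> V" "v \<in> V" "u \<noteq> v"
      and no_common: "\<And>w. w \<in> V \<Longrightarrow> w \<noteq> u \<Longrightarrow> w \<noteq> v \<Longrightarrow> {u, w} \<notin> H \<or> {v, w} \<notin> H"
      using triangle_free_obtain_pair_without_common_neighbour[OF assms(1) less.prems] by (metis not_less)
    define V' where "V' = V - {u, v}"
    have V: "V = insert u (insert v V')"
      using uv by (auto simp: V'_def)
    have "finite V'" "u \<notin> V'" "v \<notin> V'"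
      using less.prems by (auto simp: V'_def)
    then have card_V: "card V = Suc (Suc (card V'))"
      using uv(3) by (subst V) simp
    obtain f :: "nat \<Rightarrow> 'v \<Rightarrow> 'a" where
      "independent_rows {Suc s<..Suc s + card V'} V' f"
      "independent_rows (B_pairs (Suc s) (card V')) (non_edge_pairs V' H) (pair_minor f)"
      using less.hyps[of V' "Suc s"] card_V less.prems by (auto simp: V'_def)
    then show ?thesis
      unfolding card_V
      using independent_rows_extend_rows[of s "card V'" V' f u v]
        independent_minors_extend_rows[of s "card V'" V' f H u v]
        uv no_common by (subst (1 2) V) (auto simp: V'_def)
  qed
qed

definition sorted_pair :: "nat set \<Rightarrow> nat \<times> nat" where
  "sorted_pair S = (Defs.elem S 0, Defs.elem S 1)"

lemma sorted_pair_doubleton: "a < b \<Longrightarrow> sorted_pair {a, b} = (a, b)"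
proof -
  assume "a < b"
  then have "sorted_list_of_set {a, b} = [a, b]"
    by (subst sorted_list_of_set_unique[symmetric]) auto
  then show ?thesis
    by (simp add: sorted_pair_def Defs.elem_def)
qed

lemma compound_2: "compound 2 S T = to_fract (pair_minor var (sorted_pair S) (sorted_pair T))"
proof -
  let ?t = "Transposition.transpose (0::nat) 1"
  define g where "g p = of_int (sign p) * (\<Prod>i<2. var (Defs.elem S i) (Defs.elem T (p i)))" for p
  have "{..<2::nat} = {0, 1}"
    by auto
  then have perms: "{p. p permutes {..<2::nat}} = {id, ?t}"
    by (auto simp: permutes_doubleton_iff)
  have "id \<noteq> ?t"
    by (metis id_apply transpose_apply_first zero_neq_one)
  then have "(\<Sum>p | p permutes {..<2}. g p) = g id + g ?t"
    by (simp add: perms)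
  also have "\<dots> = pair_minor var (sorted_pair S) (sorted_pair T)"
    by (simp add: g_def numeral_2_eq_2 sign_id sign_swap_id pair_minor_def sorted_pair_def)
  finally show ?thesis
    by (simp add: compound_def to_fract_def g_def)
qed

lemma poly_eval_pair_minor_var: "poly_eval (case_prod x) (pair_minor var p q) = pair_minor x p q"
  by (simp add: pair_minor_def poly_eval_var poly_eval.hom_mult poly_eval.hom_minus)

lemma ksubsets_2_iff: "T \<in> ksubsets n 2 \<longleftrightarrow> (\<exists>a b. 1 \<le> a \<and> a < b \<and> b \<le> n \<and> T = {a, b})"
proof
  assume T: "T \<in> ksubsets n 2"
  then obtain x y where xy: "T = {x, y}" "x \<noteq> y"
    by (auto simp: ksubsets_def card_2_iff)
  moreover have "1 \<le> x" "x \<le> n" "1 \<le> y" "y \<le> n"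
    using T xy(1) by (auto simp: ksubsets_def)
  ultimately show "\<exists>a b. 1 \<le> a \<and> a < b \<and> b \<le> n \<and> T = {a, b}"
    by (metis insert_commute linorder_neqE_nat)
qed (auto simp: ksubsets_def)

lemma triangle_free_ksubsets_diff:
  assumes G: "G \<subseteq> ksubsets n 2"
    and triangles: "\<And>T. T \<subseteq> {1..n} \<Longrightarrow> card T = 3 \<Longrightarrow> \<exists>e\<in>G. e \<subseteq> T"
  shows "triangle_free (ksubsets n 2 - G)"
  unfolding triangle_free_def
proof (intro notI, elim exE conjE)
  fix x y z
  assume distinct: "x \<noteq> y" "y \<noteq> z" "x \<noteq> z"
    and H: "{x, y} \<in> ksubsets n 2 - G" "{y, z} \<in> ksubsets n 2 - G" "{x, z} \<in> ksubsets n 2 - G"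
  have "{x, y, z} \<subseteq> {1..n}" "card {x, y, z} = 3"
    using H distinct by (auto simp: ksubsets_def)
  then obtain e where e: "e \<in> G" "e \<subseteq> {x, y, z}"
    using triangles by blast
  then obtain a b where ab: "e = {a, b}" "a \<noteq> b"
    using G by (auto simp: ksubsets_def card_2_iff)
  then have "e = {x, y} \<or> e = {y, z} \<or> e = {x, z}"
    using e(2) by (auto simp: doubleton_eq_iff)
  then show False
    using e(1) H by auto
qed

lemma Bset_subset_ksubsets: "Bset n \<subseteq> ksubsets n 2"
  by (auto simp: Bset_def ksubsets_def)

lemma bij_betw_B_pairs_Bset: "bij_betw (\<lambda>p. {fst p, snd p}) (B_pairs 0 n) (Bset n)"
  unfolding bij_betw_def
proof
  show "inj_on (\<lambda>p. {fst p, snd p}) (B_pairs 0 n)"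
    by (auto simp: inj_on_def B_pairs_def doubleton_eq_iff)
  show "(\<lambda>p. {fst p, snd p}) ` B_pairs 0 n = Bset n"
  proof (intro equalityI subsetI)
    fix S assume "S \<in> (\<lambda>p. {fst p, snd p}) ` B_pairs 0 n"
    then obtain a b where "S = {a, b}" "1 \<le> a" "a < b" "b \<le> n" "a + b \<le> n"
      by (auto simp: B_pairs_def)
    then show "S \<in> Bset n"
      unfolding Bset_def by blast
  next
    fix S assume "S \<in> Bset n"
    then obtain a b where "S = {a, b}" "1 \<le> a" "a < b" "b \<le> n" "a + b \<le> n"
      by (auto simp: Bset_def)
    then show "S \<in> (\<lambda>p. {fst p, snd p}) ` B_pairs 0 n"
      by (intro image_eqI[of _ _ "(a, b)"]) (auto simp: B_pairs_def)
  qed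
qed

lemma rows_indep_Bset:
  assumes G: "G \<subseteq> ksubsets n 2"
    and triangles: "\<And>T. T \<subseteq> {1..n} \<Longrightarrow> card T = 3 \<Longrightarrow> \<exists>e\<in>G. e \<subseteq> T"
  shows "rows_indep 2 G (Bset n)"
proof -
  let ?H = "ksubsets n 2 - G"
  obtain f :: "nat \<Rightarrow> nat \<Rightarrow> rat" where
    "independent_rows (B_pairs 0 n) (non_edge_pairs {1..n} ?H) (pair_minor f)"
    using exists_independent_B_pair_minors[OF triangle_free_ksubsets_diff[OF G triangles], of "{1..n}" 0] by auto
  then have "independent_rows (B_pairs 0 n) G (\<lambda>p T. pair_minor f p (sorted_pair T))"
  proof (rule independent_rows_column_multiples)
    fix q assume "q \<in> non_edge_pairs {1..n} ?H"
    then obtain i j where q: "q = (i, j)" "i \<noteq> j" "{i, j} \<in> G"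
      by (auto simp: non_edge_pairs_def ksubsets_def)
    show "\<exists>T\<in>G. \<exists>t. \<forall>p\<in>B_pairs 0 n. pair_minor f p q = t * pair_minor f p (sorted_pair T)"
    proof (cases "i < j")
      case True
      then show ?thesis
        using q by (intro bexI[of _ "{i, j}"] exI[of _ 1]) (auto simp: sorted_pair_doubleton)
    next
      case False
      then have "j < i"
        using q(2) by simp
      then have "sorted_pair {i, j} = (j, i)"
        using sorted_pair_doubleton[of j i] by (simp add: insert_commute)
      then show ?thesis
        using q by (intro bexI[of _ "{i, j}"] exI[of _ "-1"]) (simp_all add: pair_minor_def)
    qed
  qed
  moreover have "sorted_pair {fst p, snd p} = p" if "p \<in> B_pairs 0 n" for p
    using that by (auto simp: B_pairs_def sorted_pair_doubleton)
  ultimately have "independent_rows (Bset n) G (\<lambda>S T. pair_minor f (sorted_pair S) (sorted_pair T))"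
    by (simp add: independent_rows_bij_betw[OF bij_betw_B_pairs_Bset] cong: independent_rows_cong)
  moreover have "finite (Bset n)" "finite G"
    using finite_subset[OF Bset_subset_ksubsets finite_ksubsets] finite_subset[OF G finite_ksubsets] .
  ultimately have "independent_rows (Bset n) G
      (\<lambda>S T. to_fract (pair_minor var (sorted_pair S) (sorted_pair T)))"
    by (intro independent_rows_to_fract[where x = "case_prod f"]) (simp_all add: poly_eval_pair_minor_var)
  then show ?thesis
    by (simp add: rows_indep_def independent_rows_def compound_2)
qed

lemma Bset_precedes:
  assumes sum_order: "\<And>a b a' b'. 1 \<le> a \<Longrightarrow> a < b \<Longrightarrow> b \<le> n \<Longrightarrow> 1 \<le> a' \<Longrightarrow> a' < b' \<Longrightarrow>
      b' \<le> n \<Longrightarrow> a + b < a' + b' \<Longrightarrow> ({a, b}, {a', b'}) \<in> r"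
    and "S \<in> Bset n" and T: "T \<in> ksubsets n 2 - Bset n"
  shows "(S, T) \<in> r"
proof -
  obtain a b where S: "S = {a, b}" "1 \<le> a" "a < b" "b \<le> n" "a + b \<le> n"
    using \<open>S \<in> Bset n\<close> by (auto simp: Bset_def)
  obtain a' b' where T': "T = {a', b'}" "1 \<le> a'" "a' < b'" "b' \<le> n"
    using T by (auto simp: ksubsets_2_iff)
  have "n < a' + b'"
  proof (rule ccontr)
    assume "\<not> n < a' + b'"
    then have "T \<in> Bset n"
      using T' unfolding Bset_def by (intro CollectI exI[of _ a'] exI[of _ b']) simp
    with T show False
      by simp
  qed
  then show ?thesis
    using sum_order[of a b a' b'] S T' by auto
qed

theorem mainTheorem4:
  fixes n :: nat and r :: "(nat set \<times> nat set) set" and G :: "nat set set"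
  assumes "term_order n 2 r"
    and "\<And>a b a' b'. 1 \<le> a \<Longrightarrow> a < b \<Longrightarrow> b \<le> n \<Longrightarrow> 1 \<le> a' \<Longrightarrow> a' < b' \<Longrightarrow> b' \<le> n \<Longrightarrow>
           a + b < a' + b' \<Longrightarrow> ({a, b}, {a', b'}) \<in> r \<and> {a, b} \<noteq> {a', b'}"
    and "G \<subseteq> ksubsets n 2"
    and "\<And>T. T \<subseteq> {1..n} \<Longrightarrow> card T = 3 \<Longrightarrow> \<exists>e\<in>G. e \<subseteq> T"
  shows "Bset n \<subseteq> ext_shift n 2 r G"
proof (rule ext_shift_contains_initial_segment[OF assms(1) Bset_subset_ksubsets])
  show "(S, T) \<in> r" if "S \<in> Bset n" "T \<in> ksubsets n 2 - Bset n" for S T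
    using Bset_precedes[of n r] assms(2) that by blast
  show "rows_indep 2 G (Bset n)"
    using assms(3,4) by (rule rows_indep_Bset)
qed

end
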